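(* Let $n\ge 3$, let $K_n$ be the complete graph on $n$ vertices, and let $H(d,q)$ be the Hamming graph with $d\ge 1$ and $q\ge 3$. Let the distinct adjacency eigenvalues of $H(d,q)$ be $\lambda_i=d(q-1)-qi$ for $i=0,1,\ldots,d$, and its distinct distance eigenvalues be $\mu_0=t=dq^{d-1}(q-1)$, $\mu_1=-q^{d-1}$, $\mu_2=0$. Then the distance eigenvalues of $K_n\otimes H(d,q)$ are $2n-2+nt+\lambda_0$, $2n-2-nq^{d-1}+\lambda_1$, $2n-2+\lambda_i$ for $i=2,3,\ldots,d$, and $\lambda_i-2$ for $i=0,1,\ldots,d$.
   Context: The Hamming graph $H(d,q)$ has as vertices all ordered $d$-tuples over a $q$-element set, two vertices being adjacent if and only if they differ in exactly one coordinate. The Kronecker product $G\otimes H$ of simple graphs $G,H$ has vertex set $V(G)\times V(H)$, with $(x,y)$ adjacent to $(u,v)$ if and only if $xu\in E(G)$ and $yv\in E(H)$. Distance eigenvalues are the eigenvalues of the distance matrix, whose $(u,v)$ entry is the length of a shortest $u$–$v$ path. *)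

theory Defs
  imports Complex_Main
begin

text \<open>A simple graph is given by a finite vertex set V and a symmetric irreflexive
adjacency relation adj (only its restriction to V matters).\<close>

definition has_walk :: "'a set \<Rightarrow> ('a \<Rightarrow> 'a \<Rightarrow> bool) \<Rightarrow> 'a \<Rightarrow> 'a \<Rightarrow> nat \<Rightarrow> bool" where
  "has_walk V adj u v k \<longleftrightarrow>
     (\<exists>p :: nat \<Rightarrow> 'a. p 0 = u \<and> p k = v \<and> (\<forall>i\<le>k. p i \<in> V) \<and>
        (\<forall>i<k. adj (p i) (p (Suc i))))"

definition graph_dist :: "'a set \<Rightarrow> ('a \<Rightarrow> 'a \<Rightarrow> bool) \<Rightarrow> 'a \<Rightarrow> 'a \<Rightarrow> nat" where
  "graph_dist V adj u v = (LEAST k. has_walk V adj u v k)"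

definition distance_matrix :: "'a set \<Rightarrow> ('a \<Rightarrow> 'a \<Rightarrow> bool) \<Rightarrow> 'a \<Rightarrow> 'a \<Rightarrow> real" where
  "distance_matrix V adj u v = real (graph_dist V adj u v)"

definition is_eigenvalue_on :: "'a set \<Rightarrow> ('a \<Rightarrow> 'a \<Rightarrow> real) \<Rightarrow> real \<Rightarrow> bool" where
  "is_eigenvalue_on V M \<mu> \<longleftrightarrow>
     (\<exists>x :: 'a \<Rightarrow> real. (\<exists>v\<in>V. x v \<noteq> 0) \<and>
        (\<forall>u\<in>V. (\<Sum>w\<in>V. M u w * x w) = \<mu> * x u))"

definition distance_eigenvalues :: "'a set \<Rightarrow> ('a \<Rightarrow> 'a \<Rightarrow> bool) \<Rightarrow> real set" where
  "distance_eigenvalues V adj = {\<mu>. is_eigenvalue_on V (distance_matrix V adj) \<mu>}"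

definition complete_verts :: "nat \<Rightarrow> nat set" where
  "complete_verts n = {0..<n}"
definition complete_adj :: "nat \<Rightarrow> nat \<Rightarrow> bool" where
  "complete_adj a b \<longleftrightarrow> a \<noteq> b"

definition hamming_verts :: "nat \<Rightarrow> nat \<Rightarrow> nat list set" where
  "hamming_verts d q = {xs. length xs = d \<and> set xs \<subseteq> {0..<q}}"
definition hamming_adj :: "nat list \<Rightarrow> nat list \<Rightarrow> bool" where
  "hamming_adj xs ys \<longleftrightarrow> length xs = length ys \<and>
     card {i. i < length xs \<and> xs ! i \<noteq> ys ! i} = 1"

definition kron_adj :: "('a \<Rightarrow> 'a \<Rightarrow> bool) \<Rightarrow> ('b \<Rightarrow> 'b \<Rightarrow> bool) \<Rightarrow> 'a \<times> 'b \<Rightarrow> 'a \<times> 'b \<Rightarrow> bool" where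
  "kron_adj adjG adjH p r \<longleftrightarrow> adjG (fst p) (fst r) \<and> adjH (snd p) (snd r)"

end

theory Submission
  imports Defs
begin

text \<open>For \<open>n, q \<ge> 3\<close> the distance in \<open>K\<^sub>n \<otimes> H(d,q)\<close> between \<open>(a,x)\<close> and \<open>(b,y)\<close> is the
  Hamming distance \<open>h(x,y)\<close>, except that it is 2 instead of 1 when \<open>a = b\<close> and \<open>h(x,y) = 1\<close>, and 2
  instead of 0 when \<open>a \<noteq> b\<close> and \<open>x = y\<close>. So the distance matrix is
  \<open>J \<otimes> D\<^sub>H + I \<otimes> A\<^sub>H + 2(J - I) \<otimes> I\<close>, with \<open>A\<^sub>H\<close>, \<open>D\<^sub>H\<close> the adjacency and distance matrices
  of \<open>H(d,q)\<close>. Every product \<open>u \<otimes> \<phi>\<^sub>1 \<otimes> \<dots> \<otimes> \<phi>\<^sub>d\<close> whose factors are the all-ones vector or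
  have sum zero is a common eigenvector of all these matrices; its eigenvalue depends only on whether
  \<open>u\<close> is all-ones and on the number \<open>i\<close> of the \<open>\<phi>\<^sub>j\<close> that are not. These products span, and
  the distance matrix is symmetric, so an eigenvector for any other value would be orthogonal to
  all of them and hence zero.\<close>

section \<open>Walks\<close>

lemma has_walk_0 [simp]: "has_walk V adj u v 0 \<longleftrightarrow> u = v \<and> u \<in> V"
  unfolding has_walk_def by auto

lemma has_walk_Suc:
  "has_walk V adj u v (Suc k) \<longleftrightarrow> u \<in> V \<and> (\<exists>w. adj u w \<and> has_walk V adj w v k)"
proof
  assume "has_walk V adj u v (Suc k)"
  then obtain p where p: "p 0 = u" "p (Suc k) = v" "\<forall>i\<le>Suc k. p i \<in> V"
    "\<forall>i<Suc k. adj (p i) (p (Suc i))" unfolding has_walk_def by blast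
  then have "has_walk V adj (p 1) v k"
    unfolding has_walk_def by (intro exI[of _ "p \<circ> Suc"]) auto
  with p show "u \<in> V \<and> (\<exists>w. adj u w \<and> has_walk V adj w v k)" by force
next
  assume "u \<in> V \<and> (\<exists>w. adj u w \<and> has_walk V adj w v k)"
  then obtain w p where u: "u \<in> V" "adj u w" and p: "p 0 = w" "p k = v" "\<forall>i\<le>k. p i \<in> V"
    "\<forall>i<k. adj (p i) (p (Suc i))" unfolding has_walk_def by blast
  let ?p = "\<lambda>i. case i of 0 \<Rightarrow> u | Suc j \<Rightarrow> p j"
  have "\<forall>i<Suc k. adj (?p i) (?p (Suc i))"
    using u p by (auto split: nat.split simp: less_Suc_eq_0_disj)
  moreover have "\<forall>i\<le>Suc k. ?p i \<in> V"
    using u p by (auto split: nat.split)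
  ultimately show "has_walk V adj u v (Suc k)"
    unfolding has_walk_def using p by (intro exI[of _ ?p]) auto
qed

lemma has_walk_Suc_0 [simp]: "has_walk V adj u v (Suc 0) \<longleftrightarrow> u \<in> V \<and> v \<in> V \<and> adj u v"
  by (auto simp: has_walk_Suc)

lemma has_walk_in_V: "has_walk V adj u v k \<Longrightarrow> u \<in> V \<and> v \<in> V"
  unfolding has_walk_def by force

lemma has_walk_trans:
  "has_walk V adj u v k \<Longrightarrow> has_walk V adj v w m \<Longrightarrow> has_walk V adj u w (k + m)"
  by (induction k arbitrary: u) (auto simp: has_walk_Suc)

lemma has_walk_kron:
  "has_walk (A \<times> B) (kron_adj adjA adjB) (a, x) (b, y) k \<longleftrightarrow>
   has_walk A adjA a b k \<and> has_walk B adjB x y k"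
proof (induction k arbitrary: a x)
  case (Suc k)
  then show ?case
    by (auto simp: has_walk_Suc kron_adj_def)
qed auto

lemma graph_dist_eqI:
  assumes "has_walk V adj u v k" and "\<And>m. has_walk V adj u v m \<Longrightarrow> k \<le> m"
  shows "graph_dist V adj u v = k"
  unfolding graph_dist_def using assms by (rule Least_equality)

lemma has_walk_complete_iff:
  assumes "n \<ge> 3"
  shows "has_walk (complete_verts n) complete_adj a b k \<longleftrightarrow>
    a < n \<and> b < n \<and> (k = 0 \<longrightarrow> a = b) \<and> (k = 1 \<longrightarrow> a \<noteq> b)"
proof (induction k arbitrary: a)
  case 0
  then show ?case by (auto simp: complete_verts_def)
next
  case (Suc k a)
  show ?case
  proof
    assume "has_walk (complete_verts n) complete_adj a b (Suc k)"
    then obtain w where "a < n" "a \<noteq> w" "has_walk (complete_verts n) complete_adj w b k"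
      by (auto simp: has_walk_Suc complete_verts_def complete_adj_def)
    then show "a < n \<and> b < n \<and> (Suc k = 0 \<longrightarrow> a = b) \<and> (Suc k = 1 \<longrightarrow> a \<noteq> b)"
      unfolding Suc.IH by auto
  next
    assume ab: "a < n \<and> b < n \<and> (Suc k = 0 \<longrightarrow> a = b) \<and> (Suc k = 1 \<longrightarrow> a \<noteq> b)"
    define w :: nat where "w = (if k = 0 then b else if a \<noteq> 0 \<and> b \<noteq> 0 then 0
      else if a \<noteq> 1 \<and> b \<noteq> 1 then 1 else 2)"
    have "w < n" "w \<noteq> a" "k \<noteq> 0 \<Longrightarrow> w \<noteq> b" "k = 0 \<Longrightarrow> w = b"
      using assms ab by (auto simp: w_def)
    then have "complete_adj a w" "has_walk (complete_verts n) complete_adj w b k"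
      using ab unfolding Suc.IH by (auto simp: complete_adj_def)
    then show "has_walk (complete_verts n) complete_adj a b (Suc k)"
      using ab by (auto simp: has_walk_Suc complete_verts_def)
  qed
qed

section \<open>The Hamming graph\<close>

fun hamming_dist :: "'a list \<Rightarrow> 'a list \<Rightarrow> nat" where
  "hamming_dist (x # xs) (y # ys) = (if x = y then 0 else 1) + hamming_dist xs ys"
| "hamming_dist _ _ = 0"

lemma hamming_dist_eq_length_filter:
  "length xs = length ys \<Longrightarrow> hamming_dist xs ys = length (filter (\<lambda>(x, y). x \<noteq> y) (zip xs ys))"
  by (induction xs ys rule: list_induct2) auto

lemma hamming_dist_eq_card:
  assumes "length xs = length ys"
  shows "hamming_dist xs ys = card {i. i < length xs \<and> xs ! i \<noteq> ys ! i}"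
proof -
  have "{i. i < length xs \<and> xs ! i \<noteq> ys ! i} =
      {i. i < length (zip xs ys) \<and> (\<lambda>(x, y). x \<noteq> y) (zip xs ys ! i)}"
    using assms by auto
  then show ?thesis
    using assms by (simp only: hamming_dist_eq_length_filter length_filter_conv_card)
qed

lemma hamming_adj_iff: "hamming_adj xs ys \<longleftrightarrow> length xs = length ys \<and> hamming_dist xs ys = 1"
  unfolding hamming_adj_def by (auto simp: hamming_dist_eq_card)

lemma hamming_dist_eq_0_iff: "length xs = length ys \<Longrightarrow> hamming_dist xs ys = 0 \<longleftrightarrow> xs = ys"
  by (induction xs ys rule: list_induct2) auto

lemma hamming_dist_self [simp]: "hamming_dist xs xs = 0"
  by (induction xs) auto

lemma hamming_dist_commute: "hamming_dist xs ys = hamming_dist ys xs"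
  by (induction xs ys rule: hamming_dist.induct) auto

lemma hamming_dist_triangle:
  "length ys = length zs \<Longrightarrow> hamming_dist xs zs \<le> hamming_dist xs ys + hamming_dist ys zs"
proof (induction ys zs arbitrary: xs rule: list_induct2)
  case (Cons y ys z zs)
  then show ?case by (cases xs) fastforce+
qed simp

lemma Cons_in_hamming_verts [simp]:
  "c # xs \<in> hamming_verts (Suc d) q \<longleftrightarrow> c < q \<and> xs \<in> hamming_verts d q"
  unfolding hamming_verts_def by auto

lemma hamming_verts_SucE:
  assumes "xs \<in> hamming_verts (Suc d) q"
  obtains c ys where "xs = c # ys" "c < q" "ys \<in> hamming_verts d q"
  using assms unfolding hamming_verts_def by (cases xs) auto

lemma length_hamming_verts: "xs \<in> hamming_verts d q \<Longrightarrow> length xs = d"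
  unfolding hamming_verts_def by auto

lemma hamming_verts_0: "hamming_verts 0 q = {[]}"
  unfolding hamming_verts_def by auto

lemma hamming_verts_Suc:
  "hamming_verts (Suc d) q = (\<lambda>(c, xs). c # xs) ` ({0..<q} \<times> hamming_verts d q)"
proof (intro set_eqI iffI)
  fix zs
  assume "zs \<in> hamming_verts (Suc d) q"
  then obtain c xs where "zs = c # xs" "c < q" "xs \<in> hamming_verts d q"
    by (rule hamming_verts_SucE)
  then show "zs \<in> (\<lambda>(c, xs). c # xs) ` ({0..<q} \<times> hamming_verts d q)"
    by (auto intro!: image_eqI[of _ _ "(c, xs)"])
qed auto

lemma finite_hamming_verts: "finite (hamming_verts d q)"
  by (induction d) (simp_all add: hamming_verts_0 hamming_verts_Suc)

lemma sum_hamming_verts_Suc: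
  "(\<Sum>zs\<in>hamming_verts (Suc d) q. f zs) = (\<Sum>c\<in>{0..<q}. \<Sum>xs\<in>hamming_verts d q. f (c # xs))"
  unfolding hamming_verts_Suc
  by (subst sum.reindex) (auto simp: inj_on_def sum.cartesian_product intro!: sum.cong)

lemma hamming_adj_Cons:
  "length xs = length ys \<Longrightarrow> hamming_adj (c # xs) (c' # ys) \<longleftrightarrow>
     (c \<noteq> c' \<and> xs = ys) \<or> (c = c' \<and> hamming_adj xs ys)"
  by (auto simp: hamming_adj_iff hamming_dist_eq_0_iff)

lemma hamming_dist_le_walk:
  "has_walk (hamming_verts d q) hamming_adj xs ys k \<Longrightarrow> hamming_dist xs ys \<le> k"
proof (induction k arbitrary: xs)
  case (Suc k)
  then obtain zs where "hamming_adj xs zs" and walk: "has_walk (hamming_verts d q) hamming_adj zs ys k"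
    by (auto simp: has_walk_Suc)
  moreover have "length ys = length zs"
    using has_walk_in_V[OF walk] by (auto dest: length_hamming_verts)
  moreover have "hamming_dist zs ys \<le> k"
    using Suc.IH walk .
  ultimately show ?case
    using hamming_dist_triangle[of zs ys xs] by (auto simp: hamming_adj_iff)
qed simp

lemma has_walk_hamming_Cons:
  assumes "has_walk (hamming_verts d q) hamming_adj xs ys k" and "c < q"
  shows "has_walk (hamming_verts (Suc d) q) hamming_adj (c # xs) (c # ys) k"
  using assms
proof (induction k arbitrary: xs)
  case (Suc k)
  then obtain zs where "xs \<in> hamming_verts d q" "hamming_adj xs zs"
    and walk: "has_walk (hamming_verts d q) hamming_adj zs ys k"
    by (auto simp: has_walk_Suc)
  moreover have "length xs = length zs"
    using has_walk_in_V[OF walk] \<open>xs \<in> hamming_verts d q\<close> by (auto dest: length_hamming_verts)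
  ultimately have "hamming_adj (c # xs) (c # zs)"
    and "has_walk (hamming_verts (Suc d) q) hamming_adj (c # zs) (c # ys) k"
    using Suc by (auto simp: hamming_adj_Cons)
  then show ?case
    using Suc.prems \<open>xs \<in> hamming_verts d q\<close> by (auto simp: has_walk_Suc)
qed simp

lemma has_walk_hamming_dist:
  assumes "xs \<in> hamming_verts d q" and "ys \<in> hamming_verts d q"
  shows "has_walk (hamming_verts d q) hamming_adj xs ys (hamming_dist xs ys)"
  using assms
proof (induction d arbitrary: xs ys)
  case (Suc d)
  obtain c xs' c' ys' where xs: "xs = c # xs'" "c < q" "xs' \<in> hamming_verts d q"
    and ys: "ys = c' # ys'" "c' < q" "ys' \<in> hamming_verts d q"
    using Suc.prems by (meson hamming_verts_SucE)
  have "has_walk (hamming_verts (Suc d) q) hamming_adj (c' # xs') ys (hamming_dist xs' ys')"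
    using Suc.IH xs ys by (simp add: has_walk_hamming_Cons)
  moreover have "c \<noteq> c' \<Longrightarrow> has_walk (hamming_verts (Suc d) q) hamming_adj xs (c' # xs') 1"
    using xs ys by (simp add: hamming_adj_iff)
  ultimately show ?case
    using xs ys has_walk_trans by fastforce
qed (simp add: hamming_verts_0)

lemma has_walk_hamming_2:
  assumes "q \<ge> 3" and "d > 0" and "xs \<in> hamming_verts d q" and "ys \<in> hamming_verts d q"
    and "hamming_dist xs ys \<le> 1"
  shows "has_walk (hamming_verts d q) hamming_adj xs ys 2"
  using assms(2-5)
proof (induction d arbitrary: xs ys)
  case (Suc d)
  obtain c xs' c' ys' where xs: "xs = c # xs'" "c < q" "xs' \<in> hamming_verts d q"
    and ys: "ys = c' # ys'" "c' < q" "ys' \<in> hamming_verts d q"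
    using Suc.prems by (meson hamming_verts_SucE)
  show ?case
  proof (cases "xs' = ys'")
    case True
    define e :: nat where "e = (if c \<noteq> 0 \<and> c' \<noteq> 0 then 0 else if c \<noteq> 1 \<and> c' \<noteq> 1 then 1 else 2)"
    have "e < q" "e \<noteq> c" "e \<noteq> c'"
      using assms(1) by (auto simp: e_def)
    then have "has_walk (hamming_verts (Suc d) q) hamming_adj xs (e # xs') 1"
      and "has_walk (hamming_verts (Suc d) q) hamming_adj (e # xs') ys 1"
      using xs ys True by (auto simp: hamming_adj_iff)
    from has_walk_trans[OF this] show ?thesis
      by (simp add: numeral_2_eq_2)
  next
    case False
    have "d > 0"
      using False xs(3) ys(3) by (cases d) (auto simp: hamming_verts_0)
    moreover have "c = c'" "hamming_dist xs' ys' \<le> 1"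
      using False Suc.prems xs ys hamming_dist_eq_0_iff[of xs' ys']
      by (auto dest!: length_hamming_verts split: if_splits)
    ultimately show ?thesis
      using Suc.IH xs ys by (simp add: has_walk_hamming_Cons)
  qed
qed simp

section \<open>Distances in \<open>K\<^sub>n \<otimes> H(d,q)\<close>\<close>

fun kron_hamming_dist :: "nat \<times> nat list \<Rightarrow> nat \<times> nat list \<Rightarrow> nat" where
  "kron_hamming_dist (a, xs) (b, ys) = hamming_dist xs ys
     + (if a = b \<and> hamming_dist xs ys = 1 then 1 else 0) + (if a \<noteq> b \<and> xs = ys then 2 else 0)"

lemma graph_dist_kron_complete_hamming:
  assumes "n \<ge> 3" "d > 0" "q \<ge> 3"
    and "a < n" "b < n" "xs \<in> hamming_verts d q" "ys \<in> hamming_verts d q"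
  shows "graph_dist (complete_verts n \<times> hamming_verts d q) (kron_adj complete_adj hamming_adj)
      (a, xs) (b, ys) = kron_hamming_dist (a, xs) (b, ys)"
proof (rule graph_dist_eqI)
  let ?h = "hamming_dist xs ys"
  have h0: "?h = 0 \<longleftrightarrow> xs = ys"
    using assms(6,7) hamming_dist_eq_0_iff length_hamming_verts by metis
  have "has_walk (hamming_verts d q) hamming_adj xs ys (kron_hamming_dist (a, xs) (b, ys))"
    using has_walk_hamming_dist[OF assms(6,7)] has_walk_hamming_2[OF assms(3,2,6,7)]
    by (auto simp: numeral_2_eq_2)
  moreover have "has_walk (complete_verts n) complete_adj a b (kron_hamming_dist (a, xs) (b, ys))"
    using assms(1,4,5) h0 by (auto simp: has_walk_complete_iff)
  ultimately show "has_walk (complete_verts n \<times> hamming_verts d q) (kron_adj complete_adj hamming_adj)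
      (a, xs) (b, ys) (kron_hamming_dist (a, xs) (b, ys))"
    by (simp add: has_walk_kron)
next
  fix k
  assume "has_walk (complete_verts n \<times> hamming_verts d q) (kron_adj complete_adj hamming_adj)
      (a, xs) (b, ys) k"
  then have "has_walk (complete_verts n) complete_adj a b k"
    and walk: "has_walk (hamming_verts d q) hamming_adj xs ys k"
    by (simp_all add: has_walk_kron)
  then have "k = 0 \<Longrightarrow> a = b \<and> xs = ys" "k = 1 \<Longrightarrow> a \<noteq> b \<and> hamming_dist xs ys = 1"
    by (auto simp: has_walk_complete_iff[OF assms(1)] hamming_adj_iff complete_adj_def)
  then show "kron_hamming_dist (a, xs) (b, ys) \<le> k"
    using hamming_dist_le_walk[OF walk] by (cases "k \<le> 1") (auto simp: le_Suc_eq)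
qed

section \<open>Symmetric matrices with a spanning family of eigenvectors\<close>

lemma symmetric_eigenvectors_orthogonal:
  fixes M :: "'a \<Rightarrow> 'a \<Rightarrow> real"
  assumes "\<And>v w. v \<in> V \<Longrightarrow> w \<in> V \<Longrightarrow> M v w = M w v"
    and "\<And>v. v \<in> V \<Longrightarrow> (\<Sum>w\<in>V. M v w * x w) = \<mu> * x v"
    and "\<And>v. v \<in> V \<Longrightarrow> (\<Sum>w\<in>V. M v w * y w) = \<theta> * y v"
    and "\<mu> \<noteq> \<theta>"
  shows "(\<Sum>v\<in>V. x v * y v) = 0"
proof -
  have "\<mu> * (\<Sum>v\<in>V. x v * y v) = (\<Sum>v\<in>V. \<mu> * x v * y v)"
    by (simp add: sum_distrib_left mult.assoc)
  also have "\<dots> = (\<Sum>v\<in>V. (\<Sum>w\<in>V. M v w * x w) * y v)"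
    by (simp add: assms(2))
  also have "\<dots> = (\<Sum>v\<in>V. \<Sum>w\<in>V. M v w * x w * y v)"
    by (simp add: sum_distrib_right)
  also have "\<dots> = (\<Sum>w\<in>V. \<Sum>v\<in>V. M v w * x w * y v)"
    by (rule sum.swap)
  also have "\<dots> = (\<Sum>w\<in>V. x w * (\<Sum>v\<in>V. M w v * y v))"
    unfolding sum_distrib_left using assms(1)
    by (intro sum.cong refl) (simp add: mult_ac)
  also have "\<dots> = (\<Sum>w\<in>V. \<theta> * x w * y w)"
    by (intro sum.cong refl) (simp add: assms(3))
  also have "\<dots> = \<theta> * (\<Sum>v\<in>V. x v * y v)"
    by (simp add: sum_distrib_left mult.assoc)
  finally show ?thesis
    using assms(4) by (simp add: algebra_simps)
qed

text \<open>For finite \<open>S\<close>, \<open>spanning_on S P\<close> says that \<open>P\<close> spans \<open>\<real>\<^sup>S\<close>.\<close>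

definition spanning_on :: "'a set \<Rightarrow> ('a \<Rightarrow> real) set \<Rightarrow> bool" where
  "spanning_on S P \<longleftrightarrow> (\<forall>f. (\<forall>p\<in>P. (\<Sum>s\<in>S. f s * p s) = 0) \<longrightarrow> (\<forall>s\<in>S. f s = 0))"

lemma spanning_onD:
  "spanning_on S P \<Longrightarrow> (\<And>p. p \<in> P \<Longrightarrow> (\<Sum>s\<in>S. f s * p s) = 0) \<Longrightarrow> s \<in> S \<Longrightarrow> f s = 0"
  unfolding spanning_on_def by blast

lemma eigenvalue_mem_of_spanning_eigenvectors:
  assumes "\<And>v w. v \<in> V \<Longrightarrow> w \<in> V \<Longrightarrow> M v w = M w v"
    and "is_eigenvalue_on V M \<mu>" and "spanning_on V P"
    and "\<And>p. p \<in> P \<Longrightarrow> \<exists>\<theta>\<in>\<Theta>. \<forall>v\<in>V. (\<Sum>w\<in>V. M v w * p w) = \<theta> * p v"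
  shows "\<mu> \<in> \<Theta>"
proof (rule ccontr)
  assume "\<mu> \<notin> \<Theta>"
  obtain x where x: "\<exists>v\<in>V. x v \<noteq> 0" "\<And>v. v \<in> V \<Longrightarrow> (\<Sum>w\<in>V. M v w * x w) = \<mu> * x v"
    using assms(2) unfolding is_eigenvalue_on_def by blast
  have "(\<Sum>v\<in>V. x v * p v) = 0" if p: "p \<in> P" for p
  proof -
    obtain \<theta> where "\<theta> \<in> \<Theta>" "\<And>v. v \<in> V \<Longrightarrow> (\<Sum>w\<in>V. M v w * p w) = \<theta> * p v"
      using assms(4)[OF p] by blast
    with \<open>\<mu> \<notin> \<Theta>\<close> show ?thesis
      using symmetric_eigenvectors_orthogonal[OF assms(1) x(2)] by metis
  qed
  then show False
    using assms(3) x(1) unfolding spanning_on_def by blast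
qed

lemma spanning_on_Times:
  assumes "spanning_on S P" and "spanning_on T Q"
  shows "spanning_on (S \<times> T) {\<lambda>(s, t). p s * r t | p r. p \<in> P \<and> r \<in> Q}"
  unfolding spanning_on_def
proof (intro allI impI ballI)
  fix f :: "_ \<Rightarrow> real" and st
  assume orth: "\<forall>pr\<in>{\<lambda>(s, t). p s * r t | p r. p \<in> P \<and> r \<in> Q}. (\<Sum>st\<in>S \<times> T. f st * pr st) = 0"
    and "st \<in> S \<times> T"
  then obtain s t where st: "st = (s, t)" "s \<in> S" "t \<in> T"
    by blast
  have "(\<Sum>s\<in>S. f (s, t) * p s) = 0" if p: "p \<in> P" for p
  proof -
    have "(\<Sum>t\<in>T. (\<Sum>s\<in>S. f (s, t) * p s) * r t) = 0" if r: "r \<in> Q" for r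
    proof -
      have "(\<Sum>t\<in>T. (\<Sum>s\<in>S. f (s, t) * p s) * r t) = (\<Sum>s\<in>S. \<Sum>t\<in>T. f (s, t) * (p s * r t))"
        unfolding sum_distrib_right by (subst sum.swap) (simp add: mult.assoc)
      also have "\<dots> = (\<Sum>st\<in>S \<times> T. f st * (\<lambda>(s, t). p s * r t) st)"
        by (simp add: sum.cartesian_product split_def)
      also have "\<dots> = 0"
        using p r by (intro orth[rule_format]) blast
      finally show ?thesis .
    qed
    with assms(2) show ?thesis
      unfolding spanning_on_def using st(3) by fast
  qed
  with assms(1) show "f st = 0"
    unfolding spanning_on_def using st by fast
qed

section \<open>Product eigenvectors of the Hamming graph\<close>

definition one_or_sum_zero :: "nat \<Rightarrow> (nat \<Rightarrow> real) set" where
  "one_or_sum_zero m = insert (\<lambda>_. 1) {\<phi>. (\<Sum>c\<in>{0..<m}. \<phi> c) = 0}"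

lemma sum_one_or_sum_zero:
  "\<phi> \<in> one_or_sum_zero m \<Longrightarrow> (\<Sum>c\<in>{0..<m}. \<phi> c) = (if \<phi> = (\<lambda>_. 1) then real m else 0)"
  unfolding one_or_sum_zero_def by auto

lemma spanning_on_one_or_sum_zero: "spanning_on {0..<m} (one_or_sum_zero m)"
  unfolding spanning_on_def
proof (intro allI impI)
  fix f :: "nat \<Rightarrow> real"
  assume orth: "\<forall>\<phi>\<in>one_or_sum_zero m. (\<Sum>c\<in>{0..<m}. f c * \<phi> c) = 0"
  then have "(\<Sum>c\<in>{0..<m}. f c) = 0"
    by (auto simp: one_or_sum_zero_def)
  then have "f \<in> one_or_sum_zero m"
    by (simp add: one_or_sum_zero_def)
  then have "(\<Sum>c\<in>{0..<m}. f c * f c) = 0"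
    using orth by blast
  then show "\<forall>c\<in>{0..<m}. f c = 0"
    by (simp add: sum_nonneg_eq_0_iff)
qed

fun tensor :: "('a \<Rightarrow> real) list \<Rightarrow> 'a list \<Rightarrow> real" where
  "tensor (\<phi> # \<phi>s) (c # xs) = \<phi> c * tensor \<phi>s xs"
| "tensor _ _ = 1"

definition tensors :: "nat \<Rightarrow> nat \<Rightarrow> (nat list \<Rightarrow> real) set" where
  "tensors d q = {tensor \<phi>s | \<phi>s. length \<phi>s = d \<and> set \<phi>s \<subseteq> one_or_sum_zero q}"

lemma spanning_on_hamming_verts: "spanning_on (hamming_verts d q) (tensors d q)"
proof (induction d)
  case 0
  have "tensor [] \<in> tensors 0 q"
    by (auto simp: tensors_def)
  then show ?case
    by (auto simp: spanning_on_def hamming_verts_0)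
next
  case (Suc d)
  have prod: "spanning_on ({0..<q} \<times> hamming_verts d q)
      {\<lambda>(c, xs). \<phi> c * g xs | \<phi> g. \<phi> \<in> one_or_sum_zero q \<and> g \<in> tensors d q}"
    by (rule spanning_on_Times[OF spanning_on_one_or_sum_zero Suc.IH])
  show ?case
    unfolding spanning_on_def
  proof (intro allI impI ballI)
    fix f zs
    assume orth: "\<forall>g\<in>tensors (Suc d) q. (\<Sum>zs\<in>hamming_verts (Suc d) q. f zs * g zs) = 0"
      and zs: "zs \<in> hamming_verts (Suc d) q"
    have "(\<Sum>st\<in>{0..<q} \<times> hamming_verts d q. (\<lambda>(c, xs). f (c # xs)) st * p st) = 0"
      if p_mem: "p \<in> {\<lambda>(c, xs). \<phi> c * g xs | \<phi> g. \<phi> \<in> one_or_sum_zero q \<and> g \<in> tensors d q}" for p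
    proof -
      obtain \<phi> \<phi>s where p: "p = (\<lambda>(c, xs). tensor (\<phi> # \<phi>s) (c # xs))"
        and \<phi>: "\<phi> \<in> one_or_sum_zero q" and \<phi>s: "length \<phi>s = d" "set \<phi>s \<subseteq> one_or_sum_zero q"
        using p_mem by (auto simp: tensors_def)
      have "tensor (\<phi> # \<phi>s) \<in> tensors (Suc d) q"
        unfolding tensors_def using \<phi> \<phi>s by (intro CollectI exI[of _ "\<phi> # \<phi>s"]) auto
      with orth have "(\<Sum>zs\<in>hamming_verts (Suc d) q. f zs * tensor (\<phi> # \<phi>s) zs) = 0"
        by blast
      then show ?thesis
        using p by (simp add: sum_hamming_verts_Suc sum.cartesian_product split_def)
    qed
    from spanning_onD[OF prod this] show "f zs = 0"
      using zs by (auto elim: hamming_verts_SucE)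
  qed
qed

definition nontrivial_factors :: "('a \<Rightarrow> real) list \<Rightarrow> nat" where
  "nontrivial_factors \<phi>s = length (filter (\<lambda>\<phi>. \<phi> \<noteq> (\<lambda>_. 1)) \<phi>s)"

lemma nontrivial_factors_Cons:
  "nontrivial_factors (\<phi> # \<phi>s) = (if \<phi> = (\<lambda>_. 1) then nontrivial_factors \<phi>s else Suc (nontrivial_factors \<phi>s))"
  by (simp add: nontrivial_factors_def)

lemma nontrivial_factors_le_length: "nontrivial_factors \<phi>s \<le> length \<phi>s"
  by (simp add: nontrivial_factors_def)

lemma tensor_eq_1_if_trivial: "nontrivial_factors \<phi>s = 0 \<Longrightarrow> tensor \<phi>s xs = 1"
  by (induction \<phi>s xs rule: tensor.induct) (auto simp: nontrivial_factors_Cons split: if_splits)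

lemma sum_of_bool_eq_times:
  fixes f :: "'a \<Rightarrow> real"
  assumes "finite A" and "a \<in> A"
  shows "(\<Sum>x\<in>A. of_bool (a = x) * f x) = f a"
proof -
  have "(\<Sum>x\<in>A. of_bool (a = x) * f x) = (\<Sum>x\<in>{a}. of_bool (a = x) * f x)"
    using assms by (intro sum.mono_neutral_right) auto
  then show ?thesis
    by simp
qed

lemma sum_of_bool_neq_times:
  fixes f :: "'a \<Rightarrow> real"
  assumes "finite A" and "a \<in> A"
  shows "(\<Sum>x\<in>A. of_bool (a \<noteq> x) * f x) = sum f A - f a"
proof -
  have "A \<inter> {x. a \<noteq> x} = A - {a}"
    by auto
  then show ?thesis
    using assms by (simp add: sum_diff1)
qed

lemma sum_tensor:
  assumes "set \<phi>s \<subseteq> one_or_sum_zero q"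
  shows "(\<Sum>ys\<in>hamming_verts (length \<phi>s) q. tensor \<phi>s ys) =
    (if nontrivial_factors \<phi>s = 0 then real q ^ length \<phi>s else 0)"
  using assms
proof (induction \<phi>s)
  case (Cons \<phi> \<phi>s)
  have "(\<Sum>ys\<in>hamming_verts (length (\<phi> # \<phi>s)) q. tensor (\<phi> # \<phi>s) ys)
      = (\<Sum>c\<in>{0..<q}. \<phi> c) * (\<Sum>ys\<in>hamming_verts (length \<phi>s) q. tensor \<phi>s ys)"
    by (simp add: sum_hamming_verts_Suc sum_product)
  then show ?case
    using Cons by (simp add: sum_one_or_sum_zero nontrivial_factors_Cons)
qed (simp add: hamming_verts_0 nontrivial_factors_def)

definition hamming_adj_eig :: "nat \<Rightarrow> nat \<Rightarrow> nat \<Rightarrow> real" where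
  "hamming_adj_eig q d i = real d * (real q - 1) - real q * real i"

definition hamming_dist_eig :: "nat \<Rightarrow> nat \<Rightarrow> nat \<Rightarrow> real" where
  "hamming_dist_eig q d i =
    (if i = 0 then real d * real q ^ (d - 1) * (real q - 1) else if i = 1 then - (real q ^ (d - 1)) else 0)"

lemma hamming_adj_eigenvector:
  assumes "set \<phi>s \<subseteq> one_or_sum_zero q" and "xs \<in> hamming_verts (length \<phi>s) q"
  shows "(\<Sum>ys\<in>hamming_verts (length \<phi>s) q. of_bool (hamming_dist xs ys = 1) * tensor \<phi>s ys) =
    hamming_adj_eig q (length \<phi>s) (nontrivial_factors \<phi>s) * tensor \<phi>s xs"
  using assms
proof (induction \<phi>s arbitrary: xs)
  case Nil
  then show ?case by (simp add: hamming_verts_0 hamming_adj_eig_def nontrivial_factors_def)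
next
  case (Cons \<phi> \<phi>s)
  let ?H = "hamming_verts (length \<phi>s) q" and ?g = "tensor \<phi>s"
  obtain c xs' where xs: "xs = c # xs'" "c < q" "xs' \<in> ?H"
    using Cons.prems(2) by (auto elim: hamming_verts_SucE)
  have kernel: "of_bool (hamming_dist (c # xs') (c' # ys) = 1) * tensor (\<phi> # \<phi>s) (c' # ys) =
      (of_bool (c \<noteq> c') * \<phi> c') * (of_bool (xs' = ys) * ?g ys)
      + (of_bool (c = c') * \<phi> c') * (of_bool (hamming_dist xs' ys = 1) * ?g ys)"
    if "ys \<in> ?H" for c' ys
    using that xs(3) hamming_dist_eq_0_iff[of xs' ys] by (auto dest!: length_hamming_verts)
  have "(\<Sum>ys\<in>hamming_verts (length (\<phi> # \<phi>s)) q. of_bool (hamming_dist xs ys = 1) * tensor (\<phi> # \<phi>s) ys)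
      = (\<Sum>c'\<in>{0..<q}. \<Sum>ys\<in>?H. (of_bool (c \<noteq> c') * \<phi> c') * (of_bool (xs' = ys) * ?g ys)
          + (of_bool (c = c') * \<phi> c') * (of_bool (hamming_dist xs' ys = 1) * ?g ys))"
    unfolding xs(1) sum_hamming_verts_Suc length_Cons using kernel by (intro sum.cong refl)
  also have "\<dots> = (\<Sum>c'\<in>{0..<q}. of_bool (c \<noteq> c') * \<phi> c') * (\<Sum>ys\<in>?H. of_bool (xs' = ys) * ?g ys)
      + (\<Sum>c'\<in>{0..<q}. of_bool (c = c') * \<phi> c') * (\<Sum>ys\<in>?H. of_bool (hamming_dist xs' ys = 1) * ?g ys)"
    by (simp only: sum_product sum.distrib)
  also have "\<dots> = ((\<Sum>c'\<in>{0..<q}. \<phi> c') - \<phi> c) * ?g xs'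
      + \<phi> c * (hamming_adj_eig q (length \<phi>s) (nontrivial_factors \<phi>s) * ?g xs')"
    using xs Cons finite_hamming_verts
    by (simp add: sum_of_bool_eq_times sum_of_bool_neq_times del: sum_of_bool_mult_eq)
  also have "\<dots> = hamming_adj_eig q (length (\<phi> # \<phi>s)) (nontrivial_factors (\<phi> # \<phi>s)) * tensor (\<phi> # \<phi>s) xs"
    using Cons.prems(1) xs
    by (simp add: sum_one_or_sum_zero nontrivial_factors_Cons hamming_adj_eig_def algebra_simps)
  finally show ?case .
qed

lemma hamming_dist_eig_Cons:
  assumes "\<phi> \<in> one_or_sum_zero q" and "set \<phi>s \<subseteq> one_or_sum_zero q" and "c < q"
  shows "((\<Sum>c'\<in>{0..<q}. \<phi> c') - \<phi> c) * (\<Sum>ys\<in>hamming_verts (length \<phi>s) q. tensor \<phi>s ys)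
      + (\<Sum>c'\<in>{0..<q}. \<phi> c') * (hamming_dist_eig q (length \<phi>s) (nontrivial_factors \<phi>s) * tensor \<phi>s xs)
    = hamming_dist_eig q (Suc (length \<phi>s)) (nontrivial_factors (\<phi> # \<phi>s)) * (\<phi> c * tensor \<phi>s xs)"
proof -
  let ?d = "length \<phi>s" and ?i = "nontrivial_factors \<phi>s"
  have "?i \<le> ?d"
    by (rule nontrivial_factors_le_length)
  moreover have "?i = 0 \<Longrightarrow> tensor \<phi>s xs = 1"
    by (rule tensor_eq_1_if_trivial)
  moreover have "0 < ?d \<Longrightarrow> real q * real q ^ (?d - 1) = real q ^ ?d"
    by (simp add: power_eq_if)
  ultimately show ?thesis
    using assms
    by (cases "?i = 0 \<or> ?i = 1")
      (auto simp: sum_one_or_sum_zero sum_tensor nontrivial_factors_Cons hamming_dist_eig_def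
        algebra_simps power_eq_if)
qed

lemma hamming_dist_eigenvector:
  assumes "set \<phi>s \<subseteq> one_or_sum_zero q" and "xs \<in> hamming_verts (length \<phi>s) q"
  shows "(\<Sum>ys\<in>hamming_verts (length \<phi>s) q. real (hamming_dist xs ys) * tensor \<phi>s ys) =
    hamming_dist_eig q (length \<phi>s) (nontrivial_factors \<phi>s) * tensor \<phi>s xs"
  using assms
proof (induction \<phi>s arbitrary: xs)
  case Nil
  then show ?case by (simp add: hamming_verts_0 hamming_dist_eig_def nontrivial_factors_def)
next
  case (Cons \<phi> \<phi>s)
  let ?H = "hamming_verts (length \<phi>s) q" and ?g = "tensor \<phi>s"
  obtain c xs' where xs: "xs = c # xs'" "c < q" "xs' \<in> ?H"
    using Cons.prems(2) by (auto elim: hamming_verts_SucE)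
  have "(\<Sum>ys\<in>hamming_verts (length (\<phi> # \<phi>s)) q. real (hamming_dist xs ys) * tensor (\<phi> # \<phi>s) ys)
      = (\<Sum>c'\<in>{0..<q}. \<Sum>ys\<in>?H. (of_bool (c \<noteq> c') * \<phi> c') * ?g ys
          + \<phi> c' * (real (hamming_dist xs' ys) * ?g ys))"
    unfolding xs(1) sum_hamming_verts_Suc length_Cons by (intro sum.cong refl) (simp add: algebra_simps)
  also have "\<dots> = (\<Sum>c'\<in>{0..<q}. of_bool (c \<noteq> c') * \<phi> c') * (\<Sum>ys\<in>?H. ?g ys)
      + (\<Sum>c'\<in>{0..<q}. \<phi> c') * (\<Sum>ys\<in>?H. real (hamming_dist xs' ys) * ?g ys)"
    by (simp only: sum_product sum.distrib)
  also have "\<dots> = ((\<Sum>c'\<in>{0..<q}. \<phi> c') - \<phi> c) * (\<Sum>ys\<in>?H. ?g ys)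
      + (\<Sum>c'\<in>{0..<q}. \<phi> c') * (hamming_dist_eig q (length \<phi>s) (nontrivial_factors \<phi>s) * ?g xs')"
    using xs Cons by (simp add: sum_of_bool_neq_times del: sum_of_bool_mult_eq)
  also have "\<dots> = hamming_dist_eig q (length (\<phi> # \<phi>s)) (nontrivial_factors (\<phi> # \<phi>s)) * tensor (\<phi> # \<phi>s) xs"
    using Cons.prems(1) xs by (simp add: hamming_dist_eig_Cons)
  finally show ?case .
qed

section \<open>The distance spectrum of \<open>K\<^sub>n \<otimes> H(d,q)\<close>\<close>

lemma kron_hamming_dist_commute: "kron_hamming_dist v w = kron_hamming_dist w v"
  by (cases v; cases w) (auto simp: hamming_dist_commute)

lemma distance_matrix_kron_complete_hamming:
  assumes "n \<ge> 3" "d > 0" "q \<ge> 3"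
    and "v \<in> complete_verts n \<times> hamming_verts d q" "w \<in> complete_verts n \<times> hamming_verts d q"
  shows "distance_matrix (complete_verts n \<times> hamming_verts d q) (kron_adj complete_adj hamming_adj) v w
    = real (kron_hamming_dist v w)"
  using assms graph_dist_kron_complete_hamming[OF assms(1-3)]
  by (cases v; cases w) (simp add: distance_matrix_def complete_verts_def)

definition kron_dist_eig :: "nat \<Rightarrow> nat \<Rightarrow> nat \<Rightarrow> bool \<Rightarrow> nat \<Rightarrow> real" where
  "kron_dist_eig n q d one i =
    (if one then real n * hamming_dist_eig q d i + hamming_adj_eig q d i + 2 * real n - 2
     else hamming_adj_eig q d i - 2)"

lemma kron_hamming_dist_eigenvector:
  assumes "u \<in> one_or_sum_zero n" and "set \<phi>s \<subseteq> one_or_sum_zero q"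
    and "a < n" and "xs \<in> hamming_verts (length \<phi>s) q"
  shows "(\<Sum>w\<in>{0..<n} \<times> hamming_verts (length \<phi>s) q.
      real (kron_hamming_dist (a, xs) w) * (u (fst w) * tensor \<phi>s (snd w)))
    = kron_dist_eig n q (length \<phi>s) (u = (\<lambda>_. 1)) (nontrivial_factors \<phi>s) * (u a * tensor \<phi>s xs)"
proof -
  let ?H = "hamming_verts (length \<phi>s) q" and ?g = "tensor \<phi>s"
  let ?su = "\<Sum>b\<in>{0..<n}. u b"
  have kernel: "real (kron_hamming_dist (a, xs) (b, ys)) * (u b * ?g ys) =
      u b * (real (hamming_dist xs ys) * ?g ys)
      + (of_bool (a = b) * u b) * (of_bool (hamming_dist xs ys = 1) * ?g ys)
      + (2 * (of_bool (a \<noteq> b) * u b)) * (of_bool (xs = ys) * ?g ys)"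
    if "ys \<in> ?H" for b ys
    using that assms(4) hamming_dist_eq_0_iff[of xs ys]
    by (auto dest!: length_hamming_verts simp: algebra_simps)
  have "(\<Sum>w\<in>{0..<n} \<times> ?H. real (kron_hamming_dist (a, xs) w) * (u (fst w) * ?g (snd w)))
      = (\<Sum>b\<in>{0..<n}. \<Sum>ys\<in>?H. real (kron_hamming_dist (a, xs) (b, ys)) * (u b * ?g ys))"
    by (simp add: sum.cartesian_product case_prod_beta del: kron_hamming_dist.simps)
  also have "\<dots> = (\<Sum>b\<in>{0..<n}. \<Sum>ys\<in>?H. u b * (real (hamming_dist xs ys) * ?g ys)
          + (of_bool (a = b) * u b) * (of_bool (hamming_dist xs ys = 1) * ?g ys)
          + (2 * (of_bool (a \<noteq> b) * u b)) * (of_bool (xs = ys) * ?g ys))"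
    using kernel by (intro sum.cong refl)
  also have "\<dots> = ?su * (\<Sum>ys\<in>?H. real (hamming_dist xs ys) * ?g ys)
      + (\<Sum>b\<in>{0..<n}. of_bool (a = b) * u b) * (\<Sum>ys\<in>?H. of_bool (hamming_dist xs ys = 1) * ?g ys)
      + (\<Sum>b\<in>{0..<n}. 2 * (of_bool (a \<noteq> b) * u b)) * (\<Sum>ys\<in>?H. of_bool (xs = ys) * ?g ys)"
    by (simp only: sum_product sum.distrib)
  also have "\<dots> = ?su * (hamming_dist_eig q (length \<phi>s) (nontrivial_factors \<phi>s) * ?g xs)
      + u a * (hamming_adj_eig q (length \<phi>s) (nontrivial_factors \<phi>s) * ?g xs)
      + 2 * (?su - u a) * ?g xs"
    using assms finite_hamming_verts hamming_dist_eigenvector[OF assms(2,4)]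
      hamming_adj_eigenvector[OF assms(2,4)]
    by (simp add: sum_of_bool_eq_times
        sum_of_bool_neq_times sum_distrib_left[symmetric] del: sum_of_bool_mult_eq)
  also have "\<dots> = kron_dist_eig n q (length \<phi>s) (u = (\<lambda>_. 1)) (nontrivial_factors \<phi>s) * (u a * ?g xs)"
    using assms(1) by (simp add: sum_one_or_sum_zero kron_dist_eig_def algebra_simps)
  finally show ?thesis .
qed

lemma distance_matrix_kron_eigenvector:
  assumes "n \<ge> 3" "d > 0" "q \<ge> 3"
    and "u \<in> one_or_sum_zero n" "set \<phi>s \<subseteq> one_or_sum_zero q" "length \<phi>s = d"
    and "v \<in> complete_verts n \<times> hamming_verts d q"
  shows "(\<Sum>w\<in>complete_verts n \<times> hamming_verts d q.
      distance_matrix (complete_verts n \<times> hamming_verts d q) (kron_adj complete_adj hamming_adj) v w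
        * (u (fst w) * tensor \<phi>s (snd w)))
    = kron_dist_eig n q d (u = (\<lambda>_. 1)) (nontrivial_factors \<phi>s) * (u (fst v) * tensor \<phi>s (snd v))"
proof -
  obtain a xs where v: "v = (a, xs)" "a < n" "xs \<in> hamming_verts d q"
    using assms(7) by (auto simp: complete_verts_def)
  have "(\<Sum>w\<in>complete_verts n \<times> hamming_verts d q.
      distance_matrix (complete_verts n \<times> hamming_verts d q) (kron_adj complete_adj hamming_adj) v w
        * (u (fst w) * tensor \<phi>s (snd w)))
    = (\<Sum>w\<in>{0..<n} \<times> hamming_verts (length \<phi>s) q.
        real (kron_hamming_dist (a, xs) w) * (u (fst w) * tensor \<phi>s (snd w)))"
    using distance_matrix_kron_complete_hamming[OF assms(1-3,7)] v assms(6)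
    by (intro sum.cong) (auto simp: complete_verts_def)
  then show ?thesis
    using kron_hamming_dist_eigenvector[OF assms(4,5)] v assms(6) by simp
qed

lemma tensor_replicate_0: "\<forall>\<phi>\<in>set \<phi>s. \<phi> 0 = 1 \<Longrightarrow> tensor \<phi>s (replicate (length \<phi>s) 0) = 1"
  by (induction \<phi>s) auto

lemma kron_dist_eig_mem_distance_eigenvalues:
  assumes "n \<ge> 3" "d > 0" "q \<ge> 3" "i \<le> d"
  shows "kron_dist_eig n q d one i \<in>
    distance_eigenvalues (complete_verts n \<times> hamming_verts d q) (kron_adj complete_adj hamming_adj)"
proof -
  define \<delta> :: "nat \<Rightarrow> real" where "\<delta> x = of_bool (x = 0) - of_bool (x = 1)" for x
  have \<delta>: "\<delta> \<in> one_or_sum_zero m" if "m \<ge> 2" for m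
  proof -
    have "{0..<m} \<inter> {x. x = 0} = {0}" "{0..<m} \<inter> {x. x = 1} = {1}"
      using that by auto
    then show ?thesis
      by (simp add: one_or_sum_zero_def \<delta>_def sum_subtractf)
  qed
  have \<delta>_ne: "\<delta> \<noteq> (\<lambda>_. 1)"
    by (auto simp: \<delta>_def fun_eq_iff intro!: exI[of _ 1])
  define u where "u = (if one then (\<lambda>_. 1) else \<delta>)"
  define \<phi>s where "\<phi>s = replicate i \<delta> @ replicate (d - i) (\<lambda>_. 1)"
  have u: "u \<in> one_or_sum_zero n" "(u = (\<lambda>_. 1)) = one" "u 0 = 1"
    using assms \<delta> \<delta>_ne by (auto simp: u_def \<delta>_def one_or_sum_zero_def)
  have \<phi>s: "set \<phi>s \<subseteq> one_or_sum_zero q" "length \<phi>s = d" "nontrivial_factors \<phi>s = i"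
    using assms \<delta> \<delta>_ne by (auto simp: \<phi>s_def one_or_sum_zero_def nontrivial_factors_def)
  have "\<forall>\<phi>\<in>set \<phi>s. \<phi> 0 = 1"
    by (auto simp: \<phi>s_def \<delta>_def)
  then have "tensor \<phi>s (replicate d 0) = 1"
    using tensor_replicate_0 \<phi>s(2) by metis
  moreover have "(0, replicate d 0) \<in> complete_verts n \<times> hamming_verts d q"
    using assms by (auto simp: complete_verts_def hamming_verts_def)
  ultimately show ?thesis
    unfolding distance_eigenvalues_def is_eigenvalue_on_def
    using distance_matrix_kron_eigenvector[OF assms(1-3) u(1) \<phi>s(1,2)] u \<phi>s
    by (intro CollectI exI[of _ "\<lambda>w. u (fst w) * tensor \<phi>s (snd w)"] conjI bexI) auto
qed

lemma distance_eigenvalues_kron_complete_hamming: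
  assumes "n \<ge> 3" "d > 0" "q \<ge> 3"
  shows "distance_eigenvalues (complete_verts n \<times> hamming_verts d q) (kron_adj complete_adj hamming_adj)
    = {kron_dist_eig n q d one i | one i. i \<le> d}"
proof (intro antisym subsetI)
  fix \<mu>
  let ?V = "complete_verts n \<times> hamming_verts d q"
  let ?M = "distance_matrix ?V (kron_adj complete_adj hamming_adj)"
  let ?P = "{\<lambda>(a, xs). u a * g xs | u g. u \<in> one_or_sum_zero n \<and> g \<in> tensors d q}"
  assume "\<mu> \<in> distance_eigenvalues ?V (kron_adj complete_adj hamming_adj)"
  have "?M v w = ?M w v" if "v \<in> ?V" "w \<in> ?V" for v w
    using that distance_matrix_kron_complete_hamming[OF assms] kron_hamming_dist_commute by metis
  moreover from \<open>\<mu> \<in> _\<close> have "is_eigenvalue_on ?V ?M \<mu>"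
    by (simp add: distance_eigenvalues_def)
  moreover have "spanning_on ?V ?P"
    unfolding complete_verts_def by (rule spanning_on_Times[OF spanning_on_one_or_sum_zero spanning_on_hamming_verts])
  moreover have "\<exists>\<theta>\<in>{kron_dist_eig n q d one i | one i. i \<le> d}. \<forall>v\<in>?V. (\<Sum>w\<in>?V. ?M v w * p w) = \<theta> * p v"
    if "p \<in> ?P" for p
  proof -
    obtain u \<phi>s where p: "p = (\<lambda>(a, xs). u a * tensor \<phi>s xs)" and u: "u \<in> one_or_sum_zero n"
      and \<phi>s: "set \<phi>s \<subseteq> one_or_sum_zero q" "length \<phi>s = d"
      using \<open>p \<in> ?P\<close> by (auto simp: tensors_def)
    have "\<forall>v\<in>?V. (\<Sum>w\<in>?V. ?M v w * p w) = kron_dist_eig n q d (u = (\<lambda>_. 1)) (nontrivial_factors \<phi>s) * p v"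
      using distance_matrix_kron_eigenvector[OF assms u \<phi>s] by (simp add: p split_def)
    then show ?thesis
      using nontrivial_factors_le_length[of \<phi>s] \<phi>s(2) by blast
  qed
  ultimately show "\<mu> \<in> {kron_dist_eig n q d one i | one i. i \<le> d}"
    by (rule eigenvalue_mem_of_spanning_eigenvectors)
next
  fix \<mu>
  assume "\<mu> \<in> {kron_dist_eig n q d one i | one i. i \<le> d}"
  then show "\<mu> \<in> distance_eigenvalues (complete_verts n \<times> hamming_verts d q) (kron_adj complete_adj hamming_adj)"
    using kron_dist_eig_mem_distance_eigenvalues[OF assms] by blast
qed

lemma kron_dist_eig_values:
  assumes "d > 0"
  shows "{kron_dist_eig n q d one i | one i. i \<le> d} =
    {2 * real n - 2 + real n * (real d * real q ^ (d - 1) * (real q - 1)) + hamming_adj_eig q d 0,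
     2 * real n - 2 - real n * real q ^ (d - 1) + hamming_adj_eig q d 1}
    \<union> {2 * real n - 2 + hamming_adj_eig q d i | i. 2 \<le> i \<and> i \<le> d}
    \<union> {hamming_adj_eig q d i - 2 | i. i \<le> d}" (is "?E = ?R")
proof
  have "kron_dist_eig n q d one i \<in> ?R" if "i \<le> d" for one i
    using that by (cases one; cases "i \<le> 1") (auto simp: kron_dist_eig_def hamming_dist_eig_def le_Suc_eq)
  then show "?E \<subseteq> ?R"
    by blast
next
  have eqs: "kron_dist_eig n q d True 0 = 2 * real n - 2 + real n * (real d * real q ^ (d - 1) * (real q - 1))
      + hamming_adj_eig q d 0"
    "kron_dist_eig n q d True 1 = 2 * real n - 2 - real n * real q ^ (d - 1) + hamming_adj_eig q d 1"
    "\<And>i. 2 \<le> i \<Longrightarrow> kron_dist_eig n q d True i = 2 * real n - 2 + hamming_adj_eig q d i"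
    "\<And>i. kron_dist_eig n q d False i = hamming_adj_eig q d i - 2"
    by (auto simp: kron_dist_eig_def hamming_dist_eig_def)
  show "?R \<subseteq> ?E"
  proof
    fix \<mu>
    assume "\<mu> \<in> ?R"
    then consider "\<mu> = kron_dist_eig n q d True 0" | "\<mu> = kron_dist_eig n q d True 1"
      | i where "i \<le> d" "\<mu> = kron_dist_eig n q d True i" | i where "i \<le> d" "\<mu> = kron_dist_eig n q d False i"
      using eqs by auto
    moreover have "kron_dist_eig n q d one i \<in> ?E" if "i \<le> d" for one i
      using that by blast
    ultimately show "\<mu> \<in> ?E"
      using assms by cases simp_all
  qed
qed

theorem theorem4p7:
  fixes n d q :: nat
  assumes "n \<ge> 3" and "d \<ge> 1" and "q \<ge> 3"
  defines "lam \<equiv> (\<lambda>i::nat. real d * (real q - 1) - real q * real i)"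
    and "t \<equiv> real d * real q ^ (d - 1) * (real q - 1)"
  shows "distance_eigenvalues (complete_verts n \<times> hamming_verts d q)
                               (kron_adj complete_adj hamming_adj) =
           {2 * real n - 2 + real n * t + lam 0,
            2 * real n - 2 - real n * real q ^ (d - 1) + lam 1}
         \<union> {2 * real n - 2 + lam i | i. 2 \<le> i \<and> i \<le> d}
         \<union> {lam i - 2 | i. i \<le> d}"
proof -
  have "d > 0" and "lam = hamming_adj_eig q d"
    using assms(2) by (auto simp: lam_def hamming_adj_eig_def)
  then show ?thesis
    using distance_eigenvalues_kron_complete_hamming[OF assms(1) _ assms(3)] kron_dist_eig_values
    unfolding t_def by simp
qed

end
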